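(* Let $M$ be a dualizable object of a symmetric monoidal category $\mathbf{C}$, let $\Delta\colon M\to M\otimes P$ and $f\colon M\to M$ be morphisms, and let $h\colon P\to P$ satisfy $(f\otimes h)\circ\Delta=\Delta\circ f$. Then $h\circ\operatorname{tr}(\Delta\circ f)=\operatorname{tr}(\Delta\circ f)$, where $\Delta\circ f$ is regarded as a morphism $I\otimes M\to M\otimes P$ and its trace with respect to $M$ is a morphism $I\to P$.
   Context: $\mathbf{C}$ is a symmetric monoidal category with tensor $\otimes$ and unit $I$; associativity and unit isomorphisms are suppressed, and $\mathfrak{s}$ denotes any instance or composite of instances of the symmetry isomorphism. An object $M$ is dualizable if there is an object $M^*$ and maps $\eta\colon I\to M\otimes M^*$ and $\varepsilon\colon M^*\otimes M\to I$ with $(\mathrm{id}_M\otimes\varepsilon)(\eta\otimes\mathrm{id}_M)=\mathrm{id}_M$ and $(\varepsilon\otimes\mathrm{id}_{M^*})(\mathrm{id}_{M^*}\otimes\eta)=\mathrm{id}_{M^*}$. For dualizable $M$ and $f\colon Q\otimes M\to M\otimes P$, the trace of $f$ with respect to $M$ is $\operatorname{tr}(f)\colon Q\to P$, the composite $Q\xrightarrow{\mathrm{id}\otimes\eta}Q\otimes M\otimes M^*\xrightarrow{f\otimes\mathrm{id}}M\otimes P\otimes M^*\xrightarrow{\mathfrak{s}}M^*\otimes M\otimes P\xrightarrow{\varepsilon\otimes\mathrm{id}}P$. *)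

theory Defs
  imports Main
begin

text \<open>Cmp g f is the composite g after f; TOb / TAr are the tensor on objects / morphisms;
  Sym A B is the symmetry A tensor B to B tensor A.
  Associativity and unit isomorphisms are suppressed (identities), as in the paper.\<close>

record ('o, 'm) smcat =
  Ob  :: "'o \<Rightarrow> bool"
  Arr :: "'m \<Rightarrow> bool"
  Dom :: "'m \<Rightarrow> 'o"
  Cod :: "'m \<Rightarrow> 'o"
  Cmp :: "'m \<Rightarrow> 'm \<Rightarrow> 'm"
  Id  :: "'o \<Rightarrow> 'm"
  TOb :: "'o \<Rightarrow> 'o \<Rightarrow> 'o"
  TAr :: "'m \<Rightarrow> 'm \<Rightarrow> 'm"
  Unit :: "'o"
  Sym :: "'o \<Rightarrow> 'o \<Rightarrow> 'm"

definition hom :: "('o, 'm, 'x) smcat_scheme \<Rightarrow> 'o \<Rightarrow> 'o \<Rightarrow> 'm set" where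
  "hom C A B = {f. Arr C f \<and> Dom C f = A \<and> Cod C f = B}"

locale strict_smc =
  fixes C :: "('o, 'm) smcat"
  assumes arr_obs: "Arr C f \<Longrightarrow> Ob C (Dom C f) \<and> Ob C (Cod C f)"
    and id_hom: "Ob C A \<Longrightarrow> Id C A \<in> hom C A A"
    and cmp_hom: "f \<in> hom C A B \<Longrightarrow> g \<in> hom C B D \<Longrightarrow> Cmp C g f \<in> hom C A D"
    and id_left: "f \<in> hom C A B \<Longrightarrow> Cmp C (Id C B) f = f"
    and id_right: "f \<in> hom C A B \<Longrightarrow> Cmp C f (Id C A) = f"
    and cmp_assoc: "f \<in> hom C A B \<Longrightarrow> g \<in> hom C B D \<Longrightarrow> k \<in> hom C D E \<Longrightarrow>
        Cmp C k (Cmp C g f) = Cmp C (Cmp C k g) f"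
    and tob_ob: "Ob C A \<Longrightarrow> Ob C B \<Longrightarrow> Ob C (TOb C A B)"
    and tar_hom: "f \<in> hom C A B \<Longrightarrow> g \<in> hom C D E \<Longrightarrow> TAr C f g \<in> hom C (TOb C A D) (TOb C B E)"
    and tar_id: "Ob C A \<Longrightarrow> Ob C B \<Longrightarrow> TAr C (Id C A) (Id C B) = Id C (TOb C A B)"
    and interchange: "f \<in> hom C A B \<Longrightarrow> g \<in> hom C B D \<Longrightarrow> f' \<in> hom C A' B' \<Longrightarrow> g' \<in> hom C B' D' \<Longrightarrow>
        TAr C (Cmp C g f) (Cmp C g' f') = Cmp C (TAr C g g') (TAr C f f')"
    and unit_ob: "Ob C (Unit C)"
    and tob_unit_left: "Ob C A \<Longrightarrow> TOb C (Unit C) A = A"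
    and tob_unit_right: "Ob C A \<Longrightarrow> TOb C A (Unit C) = A"
    and tob_assoc: "Ob C A \<Longrightarrow> Ob C B \<Longrightarrow> Ob C D \<Longrightarrow> TOb C (TOb C A B) D = TOb C A (TOb C B D)"
    and tar_unit_left: "Arr C f \<Longrightarrow> TAr C (Id C (Unit C)) f = f"
    and tar_unit_right: "Arr C f \<Longrightarrow> TAr C f (Id C (Unit C)) = f"
    and tar_assoc: "Arr C f \<Longrightarrow> Arr C g \<Longrightarrow> Arr C k \<Longrightarrow> TAr C (TAr C f g) k = TAr C f (TAr C g k)"
    and sym_hom: "Ob C A \<Longrightarrow> Ob C B \<Longrightarrow> Sym C A B \<in> hom C (TOb C A B) (TOb C B A)"
    and sym_natural: "f \<in> hom C A B \<Longrightarrow> g \<in> hom C D E \<Longrightarrow>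
        Cmp C (Sym C B E) (TAr C f g) = Cmp C (TAr C g f) (Sym C A D)"
    and sym_inv: "Ob C A \<Longrightarrow> Ob C B \<Longrightarrow> Cmp C (Sym C B A) (Sym C A B) = Id C (TOb C A B)"
    and sym_hexagon: "Ob C A \<Longrightarrow> Ob C B \<Longrightarrow> Ob C D \<Longrightarrow>
        Sym C A (TOb C B D) = Cmp C (TAr C (Id C B) (Sym C A D)) (TAr C (Sym C A B) (Id C D))"

definition dual_data :: "('o, 'm) smcat \<Rightarrow> 'o \<Rightarrow> 'o \<Rightarrow> 'm \<Rightarrow> 'm \<Rightarrow> bool" where
  "dual_data C M Ms eta eps \<longleftrightarrow>
     Ob C M \<and> Ob C Ms \<and>
     eta \<in> hom C (Unit C) (TOb C M Ms) \<and> eps \<in> hom C (TOb C Ms M) (Unit C) \<and>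
     Cmp C (TAr C (Id C M) eps) (TAr C eta (Id C M)) = Id C M \<and>
     Cmp C (TAr C eps (Id C Ms)) (TAr C (Id C Ms) eta) = Id C Ms"

definition dualizable :: "('o, 'm) smcat \<Rightarrow> 'o \<Rightarrow> bool" where
  "dualizable C M \<longleftrightarrow> (\<exists>Ms eta eps. dual_data C M Ms eta eps)"

definition trace :: "('o, 'm) smcat \<Rightarrow> 'o \<Rightarrow> 'o \<Rightarrow> 'm \<Rightarrow> 'm \<Rightarrow> 'o \<Rightarrow> 'o \<Rightarrow> 'm \<Rightarrow> 'm" where
  "trace C M Ms eta eps Q P f =
     Cmp C (TAr C eps (Id C P))
       (Cmp C (Sym C (TOb C M P) Ms)
         (Cmp C (TAr C f (Id C Ms)) (TAr C (Id C Q) eta)))"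

end

theory Submission imports Defs begin

(*
  Write tr(g) : Q \<rightarrow> P for the trace of g : Q \<otimes> M \<rightarrow> M \<otimes> P.  The theorem follows from
  two general properties of the trace, proved for an arbitrary parameter object Q:

  (1) naturality in P:   h \<circ> tr(g) = tr((id_M \<otimes> h) \<circ> g)            (trace_natural)
  (2) cyclicity in M:    tr(g \<circ> (id_Q \<otimes> f)) = tr((f \<otimes> id_P) \<circ> g)    (trace_cyclic)

  Cyclicity is proved by moving f across the coevaluation as its mate
  f' : M' \<rightarrow> M', which satisfies (f \<otimes> id) \<circ> \<eta> = (id \<otimes> f') \<circ> \<eta> and
  \<epsilon> \<circ> (f' \<otimes> id) = \<epsilon> \<circ> (id \<otimes> f); then f' slides past g and the symmetry.
  With Q = I and g = \<Delta>: h \<circ> tr(\<Delta> f) = h \<circ> tr((f \<otimes> id) \<Delta>) = tr((f \<otimes> h) \<Delta>) = tr(\<Delta> f).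
*)

context strict_smc begin

lemma homE: "f \<in> hom C A B \<Longrightarrow> Arr C f \<and> Dom C f = A \<and> Cod C f = B"
  by (simp add: hom_def)

lemma homI: "Arr C f \<Longrightarrow> Dom C f = A \<Longrightarrow> Cod C f = B \<Longrightarrow> f \<in> hom C A B"
  by (simp add: hom_def)

lemma ob_dom_cod [simp]: "Arr C f \<Longrightarrow> Ob C (Dom C f)" "Arr C f \<Longrightarrow> Ob C (Cod C f)"
  using arr_obs by blast+

lemma ob_tob_unit [simp]: "Ob C A \<Longrightarrow> Ob C B \<Longrightarrow> Ob C (TOb C A B)" "Ob C (Unit C)"
  by (simp_all add: tob_ob unit_ob)

lemma id_typing [simp]:
  "Ob C A \<Longrightarrow> Arr C (Id C A)" "Ob C A \<Longrightarrow> Dom C (Id C A) = A" "Ob C A \<Longrightarrow> Cod C (Id C A) = A"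
  using id_hom homE by blast+

lemma cmp_typing [simp]:
  assumes "Arr C f" "Arr C g" "Dom C g = Cod C f"
  shows "Arr C (Cmp C g f)" "Dom C (Cmp C g f) = Dom C f" "Cod C (Cmp C g f) = Cod C g"
proof -
  have "Cmp C g f \<in> hom C (Dom C f) (Cod C g)"
    by (rule cmp_hom[of f _ "Cod C f"]) (use assms in \<open>auto intro: homI\<close>)
  then show "Arr C (Cmp C g f)" "Dom C (Cmp C g f) = Dom C f" "Cod C (Cmp C g f) = Cod C g"
    using homE by blast+
qed

lemma tar_typing [simp]:
  assumes "Arr C f" "Arr C g"
  shows "Arr C (TAr C f g)" "Dom C (TAr C f g) = TOb C (Dom C f) (Dom C g)"
    "Cod C (TAr C f g) = TOb C (Cod C f) (Cod C g)"
proof -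
  have "TAr C f g \<in> hom C (TOb C (Dom C f) (Dom C g)) (TOb C (Cod C f) (Cod C g))"
    by (rule tar_hom) (use assms in \<open>auto intro: homI\<close>)
  then show "Arr C (TAr C f g)" "Dom C (TAr C f g) = TOb C (Dom C f) (Dom C g)"
    "Cod C (TAr C f g) = TOb C (Cod C f) (Cod C g)"
    using homE by blast+
qed

lemma sym_typing [simp]:
  "Ob C A \<Longrightarrow> Ob C B \<Longrightarrow> Arr C (Sym C A B)"
  "Ob C A \<Longrightarrow> Ob C B \<Longrightarrow> Dom C (Sym C A B) = TOb C A B"
  "Ob C A \<Longrightarrow> Ob C B \<Longrightarrow> Cod C (Sym C A B) = TOb C B A"
  using sym_hom homE by blast+

lemma tob_strict [simp]:
  "Ob C A \<Longrightarrow> TOb C (Unit C) A = A"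
  "Ob C A \<Longrightarrow> TOb C A (Unit C) = A"
  "Ob C A \<Longrightarrow> Ob C B \<Longrightarrow> Ob C D \<Longrightarrow> TOb C (TOb C A B) D = TOb C A (TOb C B D)"
  by (simp_all add: tob_unit_left tob_unit_right tob_assoc)

lemma tar_strict [simp]:
  "Arr C f \<Longrightarrow> TAr C (Id C (Unit C)) f = f"
  "Arr C f \<Longrightarrow> TAr C f (Id C (Unit C)) = f"
  "Arr C f \<Longrightarrow> Arr C g \<Longrightarrow> Arr C k \<Longrightarrow> TAr C (TAr C f g) k = TAr C f (TAr C g k)"
  "Ob C A \<Longrightarrow> Ob C B \<Longrightarrow> TAr C (Id C A) (Id C B) = Id C (TOb C A B)"
  by (simp_all add: tar_unit_left tar_unit_right tar_assoc tar_id)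

lemma cmp_assoc_right [simp]:
  "Arr C f \<Longrightarrow> Arr C g \<Longrightarrow> Arr C k \<Longrightarrow> Dom C g = Cod C f \<Longrightarrow> Dom C k = Cod C g \<Longrightarrow>
   Cmp C (Cmp C k g) f = Cmp C k (Cmp C g f)"
  by (rule cmp_assoc[symmetric, of f _ "Cod C f" g "Cod C g"]) (auto intro: homI)

lemma cmp_id [simp]:
  "Arr C f \<Longrightarrow> Cod C f = B \<Longrightarrow> Cmp C (Id C B) f = f"
  "Arr C f \<Longrightarrow> Dom C f = A \<Longrightarrow> Cmp C f (Id C A) = f"
  by (rule id_left[of f "Dom C f"], auto intro: homI) (rule id_right[of f _ "Cod C f"], auto intro: homI)

lemma tar_id_assoc: "Ob C A \<Longrightarrow> Ob C B \<Longrightarrow> Arr C h \<Longrightarrow>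
  TAr C (Id C A) (TAr C (Id C B) h) = TAr C (Id C (TOb C A B)) h"
  by (metis id_typing(1) tar_strict(3,4))

lemma cmp_tar:
  "Arr C f \<Longrightarrow> Arr C g \<Longrightarrow> Arr C f' \<Longrightarrow> Arr C g' \<Longrightarrow> Dom C g = Cod C f \<Longrightarrow> Dom C g' = Cod C f' \<Longrightarrow>
   Cmp C (TAr C g g') (TAr C f f') = TAr C (Cmp C g f) (Cmp C g' f')"
  by (rule interchange[symmetric, of f _ "Cod C f" g _ f' _ "Cod C f'" g']) (auto intro: homI)

lemma sym_nat:
  "Arr C f \<Longrightarrow> Arr C g \<Longrightarrow>
   Cmp C (Sym C (Cod C f) (Cod C g)) (TAr C f g) = Cmp C (TAr C g f) (Sym C (Dom C f) (Dom C g))"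
  by (rule sym_natural) (auto intro: homI)

lemma tar_cmp_id:
  assumes "Arr C a" "Arr C b" "Dom C a = Cod C b" "Ob C D"
  shows "TAr C (Cmp C a b) (Id C D) = Cmp C (TAr C a (Id C D)) (TAr C b (Id C D))"
    and "TAr C (Id C D) (Cmp C a b) = Cmp C (TAr C (Id C D) a) (TAr C (Id C D) b)"
  using assms by (simp_all add: cmp_tar)

lemma tensor_slide:
  "Arr C a \<Longrightarrow> Arr C b \<Longrightarrow>
   Cmp C (TAr C (Id C (Cod C a)) b) (TAr C a (Id C (Dom C b)))
     = Cmp C (TAr C a (Id C (Cod C b))) (TAr C (Id C (Dom C a)) b)"
  by (simp add: cmp_tar)

end

locale duality = strict_smc +
  fixes M Ms eta eps
  assumes dual: "dual_data C M Ms eta eps"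
begin

lemma duality_typing [simp]:
  "Ob C M" "Ob C Ms" "Arr C eta" "Dom C eta = Unit C" "Cod C eta = TOb C M Ms"
  "Arr C eps" "Dom C eps = TOb C Ms M" "Cod C eps = Unit C"
  using dual unfolding dual_data_def hom_def by auto

lemma zigzag: "Cmp C (TAr C (Id C M) eps) (TAr C eta (Id C M)) = Id C M"
  using dual unfolding dual_data_def by auto

abbreviation tr :: "'a \<Rightarrow> 'a \<Rightarrow> 'b \<Rightarrow> 'b" where
  "tr \<equiv> trace C M Ms eta eps"

definition mate :: "'b \<Rightarrow> 'b" where
  "mate f = Cmp C (TAr C eps (Id C Ms))
              (Cmp C (TAr C (Id C Ms) (TAr C f (Id C Ms))) (TAr C (Id C Ms) eta))"

lemma mate_typing [simp]:
  "Arr C f \<Longrightarrow> Dom C f = M \<Longrightarrow> Cod C f = M \<Longrightarrow>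
   Arr C (mate f) \<and> Dom C (mate f) = Ms \<and> Cod C (mate f) = Ms"
  unfolding mate_def by simp

lemma eps_mate:
  assumes f: "Arr C f" "Dom C f = M" "Cod C f = M"
  shows "Cmp C eps (TAr C (mate f) (Id C M)) = Cmp C eps (TAr C (Id C Ms) f)"
proof -
  have eps_eps: "Cmp C eps (TAr C eps (Id C (TOb C Ms M)))
      = Cmp C eps (TAr C (Id C Ms) (TAr C (Id C M) eps))"
    using tensor_slide[of eps eps] by (simp add: tar_id_assoc)
  have f_eps: "Cmp C (TAr C (Id C M) eps) (TAr C f (Id C (TOb C Ms M))) = Cmp C f (TAr C (Id C M) eps)"
    using tensor_slide[of f eps] f by simp
  have snake: "Cmp C (TAr C (Id C M) eps) (Cmp C (TAr C f (Id C (TOb C Ms M))) (TAr C eta (Id C M))) = f"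
  proof -
    have "Cmp C (TAr C (Id C M) eps) (Cmp C (TAr C f (Id C (TOb C Ms M))) (TAr C eta (Id C M)))
        = Cmp C (Cmp C f (TAr C (Id C M) eps)) (TAr C eta (Id C M))"
      using f by (simp flip: cmp_assoc_right add: f_eps)
    also have "\<dots> = f"
      using f zigzag by simp
    finally show ?thesis .
  qed
  have "Cmp C eps (TAr C (mate f) (Id C M))
      = Cmp C eps (Cmp C (TAr C eps (Id C (TOb C Ms M)))
          (Cmp C (TAr C (Id C Ms) (TAr C f (Id C (TOb C Ms M)))) (TAr C (Id C Ms) (TAr C eta (Id C M)))))"
    unfolding mate_def using f by (simp add: tar_cmp_id)
  also have "\<dots> = Cmp C eps (TAr C (Id C Ms)
      (Cmp C (TAr C (Id C M) eps) (Cmp C (TAr C f (Id C (TOb C Ms M))) (TAr C eta (Id C M)))))"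
    using f eps_eps by (simp flip: cmp_assoc_right add: tar_cmp_id)
  also have "\<dots> = Cmp C eps (TAr C (Id C Ms) f)"
    unfolding snake ..
  finally show ?thesis .
qed

lemma eta_mate:
  assumes f: "Arr C f" "Dom C f = M" "Cod C f = M"
  shows "Cmp C (TAr C (Id C M) (mate f)) eta = Cmp C (TAr C f (Id C Ms)) eta"
proof -
  let ?Z = "Cmp C (TAr C (Id C M) (TAr C eps (Id C Ms))) (TAr C eta (Id C (TOb C M Ms)))"
  have snake: "?Z = Id C (TOb C M Ms)"
    using zigzag tar_cmp_id(1)[of "TAr C (Id C M) eps" "TAr C eta (Id C M)" Ms] by simp
  have eta_eta: "Cmp C (TAr C (Id C (TOb C M Ms)) eta) eta = Cmp C (TAr C eta (Id C (TOb C M Ms))) eta"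
    using tensor_slide[of eta eta] by simp
  have eta_f: "Cmp C (TAr C (Id C (TOb C M Ms)) (TAr C f (Id C Ms))) (TAr C eta (Id C (TOb C M Ms)))
      = Cmp C (TAr C eta (Id C (TOb C M Ms))) (TAr C f (Id C Ms))"
    using tensor_slide[of eta "TAr C f (Id C Ms)"] f by simp
  have "Cmp C (TAr C (Id C M) (mate f)) eta = Cmp C (TAr C (Id C M) (TAr C eps (Id C Ms)))
      (Cmp C (TAr C (Id C (TOb C M Ms)) (TAr C f (Id C Ms))) (Cmp C (TAr C (Id C (TOb C M Ms)) eta) eta))"
    unfolding mate_def using f by (simp add: tar_cmp_id tar_id_assoc)
  also have "\<dots> = Cmp C (TAr C (Id C M) (TAr C eps (Id C Ms)))
      (Cmp C (Cmp C (TAr C (Id C (TOb C M Ms)) (TAr C f (Id C Ms))) (TAr C eta (Id C (TOb C M Ms)))) eta)"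
    unfolding eta_eta using f by simp
  also have "\<dots> = Cmp C ?Z (Cmp C (TAr C f (Id C Ms)) eta)"
    unfolding eta_f using f by simp
  also have "\<dots> = Cmp C (TAr C f (Id C Ms)) eta"
    unfolding snake using f by simp
  finally show ?thesis .
qed

lemma trace_natural:
  assumes Q: "Ob C Q" and P: "Ob C P"
    and g: "Arr C g" "Dom C g = TOb C Q M" "Cod C g = TOb C M P"
    and h: "Arr C h" "Dom C h = P" "Cod C h = P"
  shows "Cmp C h (tr Q P g) = tr Q P (Cmp C (TAr C (Id C M) h) g)"
proof -
  let ?E = "TAr C eps (Id C P)" and ?S = "Sym C (TOb C M P) Ms"
  let ?coev = "TAr C (Id C Q) eta"
  let ?hE = "TAr C (Id C (TOb C Ms M)) h" and ?hM = "TAr C (TAr C (Id C M) h) (Id C Ms)"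
  have h_eps: "Cmp C h ?E = Cmp C ?E ?hE"
    using tensor_slide[of eps h] h P by simp
  have h_sym: "Cmp C ?hE ?S = Cmp C ?S ?hM"
    using sym_nat[of "TAr C (Id C M) h" "Id C Ms"] h P by (simp add: tar_id_assoc)
  have h_g: "Cmp C ?hM (TAr C g (Id C Ms)) = TAr C (Cmp C (TAr C (Id C M) h) g) (Id C Ms)"
    using h g P by (simp add: tar_cmp_id)
  have "Cmp C h (tr Q P g) = Cmp C (Cmp C h ?E) (Cmp C ?S (Cmp C (TAr C g (Id C Ms)) ?coev))"
    unfolding trace_def using Q P g h by simp
  also have "\<dots> = Cmp C ?E (Cmp C (Cmp C ?hE ?S) (Cmp C (TAr C g (Id C Ms)) ?coev))"
    unfolding h_eps using Q P g h by simp
  also have "\<dots> = Cmp C ?E (Cmp C ?S (Cmp C (Cmp C ?hM (TAr C g (Id C Ms))) ?coev))"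
    unfolding h_sym using Q P g h by simp
  also have "\<dots> = tr Q P (Cmp C (TAr C (Id C M) h) g)"
    unfolding h_g trace_def ..
  finally show ?thesis .
qed

lemma trace_cyclic:
  assumes Q: "Ob C Q" and P: "Ob C P"
    and g: "Arr C g" "Dom C g = TOb C Q M" "Cod C g = TOb C M P"
    and f: "Arr C f" "Dom C f = M" "Cod C f = M"
  shows "tr Q P (Cmp C g (TAr C (Id C Q) f)) = tr Q P (Cmp C (TAr C f (Id C P)) g)"
proof -
  let ?E = "TAr C eps (Id C P)" and ?S = "Sym C (TOb C M P) Ms" and ?F = "mate f"
  let ?coev = "TAr C (Id C Q) eta" and ?G = "TAr C g (Id C Ms)" and ?fP = "TAr C f (Id C P)"
  have F: "Arr C ?F" "Dom C ?F = Ms" "Cod C ?F = Ms"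
    using mate_typing f by auto
  have f_coev: "Cmp C (TAr C (TAr C (Id C Q) f) (Id C Ms)) ?coev
      = Cmp C (TAr C (Id C (TOb C Q M)) ?F) ?coev"
    using Q f F tar_cmp_id(2)[of "TAr C (Id C M) ?F" eta Q] tar_cmp_id(2)[of "TAr C f (Id C Ms)" eta Q]
    by (simp add: eta_mate tar_id_assoc)
  have F_g: "Cmp C ?G (TAr C (Id C (TOb C Q M)) ?F) = Cmp C (TAr C (Id C (TOb C M P)) ?F) ?G"
    using tensor_slide[of g ?F] g F by simp
  have F_sym: "Cmp C ?S (TAr C (Id C (TOb C M P)) ?F) = Cmp C (TAr C ?F (Id C (TOb C M P))) ?S"
    using sym_nat[of "Id C (TOb C M P)" ?F] F P by simp
  have F_eps: "Cmp C ?E (TAr C ?F (Id C (TOb C M P))) = Cmp C ?E (TAr C (Id C Ms) ?fP)"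
    using eps_mate[OF f] F f P tar_cmp_id(1)[of eps "TAr C ?F (Id C M)" P]
      tar_cmp_id(1)[of eps "TAr C (Id C Ms) f" P] by simp
  have f_sym: "Cmp C (TAr C (Id C Ms) ?fP) ?S = Cmp C ?S (TAr C ?fP (Id C Ms))"
    using sym_nat[of ?fP "Id C Ms"] f P by simp
  have "tr Q P (Cmp C g (TAr C (Id C Q) f))
      = Cmp C ?E (Cmp C ?S (Cmp C ?G (Cmp C (TAr C (Id C (TOb C Q M)) ?F) ?coev)))"
    unfolding trace_def using Q P g f F by (simp add: tar_cmp_id flip: f_coev)
  also have "\<dots> = Cmp C (Cmp C ?E (TAr C ?F (Id C (TOb C M P)))) (Cmp C ?S (Cmp C ?G ?coev))"
    using Q P g F by (simp flip: cmp_assoc_right add: F_g F_sym)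
  also have "\<dots> = Cmp C ?E (Cmp C (Cmp C ?S (TAr C ?fP (Id C Ms))) (Cmp C ?G ?coev))"
    unfolding F_eps f_sym[symmetric] using Q P g f by simp
  also have "\<dots> = tr Q P (Cmp C ?fP g)"
    unfolding trace_def using Q P g f by (simp add: tar_cmp_id)
  finally show ?thesis .
qed

end

theorem mainTheorem5:
  fixes C :: "('o, 'm) smcat"
  assumes "strict_smc C"
    and "dual_data C M Ms eta eps"
    and "Ob C P"
    and "Delta \<in> hom C M (TOb C M P)"
    and "f \<in> hom C M M"
    and "h \<in> hom C P P"
    and "Cmp C (TAr C f h) Delta = Cmp C Delta f"
  shows "Cmp C h (trace C M Ms eta eps (Unit C) P (Cmp C Delta f))
           = trace C M Ms eta eps (Unit C) P (Cmp C Delta f)"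
proof -
  interpret duality C M Ms eta eps
    using assms(1,2) by (simp add: duality_def duality_axioms_def)
  have D: "Arr C Delta" "Dom C Delta = TOb C (Unit C) M" "Cod C Delta = TOb C M P"
    and f: "Arr C f" "Dom C f = M" "Cod C f = M"
    and h: "Arr C h" "Dom C h = P" "Cod C h = P"
    using assms(4-6) by (auto simp: hom_def)
  have twist: "Cmp C (TAr C (Id C M) h) (Cmp C (TAr C f (Id C P)) Delta) = Cmp C Delta f"
    using D f h assms(3,7) by (simp flip: cmp_assoc_right add: cmp_tar)
  have "tr (Unit C) P (Cmp C Delta f) = tr (Unit C) P (Cmp C (TAr C f (Id C P)) Delta)"
    using trace_cyclic[OF ob_tob_unit(2) assms(3) D f] f by simp
  then show ?thesis
    using trace_natural[OF ob_tob_unit(2) assms(3) _ _ _ h, of "Cmp C (TAr C f (Id C P)) Delta"]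
      D f assms(3) by (simp add: twist)
qed

end
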